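(* There exist absolute constants $c, c_1>0$ such that the following holds. Let $\Phi:\mathbb{R}^d\to\mathbb{R}$, $\Phi(x) = W^{(1)}\,\mathrm{ReLU}(W^{(0)}x + b^{(0)}) + b^{(1)}$, be a random shallow ReLU network of width $N$, where $W^{(0)}\in\mathbb{R}^{N\times d}$ has i.i.d. $\mathcal{N}(0,2/N)$ entries, $W^{(1)}\in\mathbb{R}^{1\times N}$ has i.i.d. $\mathcal{N}(0,1)$ entries, $b^{(0)}_i \sim \mathcal{D}^{(0)}_i$ and $b^{(1)}\sim\mathcal{D}^{(1)}_1$ for arbitrary probability distributions on $\mathbb{R}$, and all of $W^{(0)},W^{(1)},b^{(0)},b^{(1)}$ are jointly independent. Then: (1) $\mathrm{Lip}(\Phi)\ge \frac{1}{4\sqrt{2}}\sqrt{d}$ with probability at least $(1-2\exp(-cN))_+(1-2\exp(-cd))_+$; (2) if $d,N>\ln(2)/c$, then $\mathbb{E}[\mathrm{Lip}(\Phi)]\ge c_1\sqrt{d}$.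
   Context: $\mathrm{ReLU}(t)=\max\{0,t\}$ componentwise; $\mathrm{Lip}(f)=\sup_{x\neq y}|f(x)-f(y)|/\|x-y\|_2$; $a_+=\max\{0,a\}$. *)

theory Defs
  imports "HOL-Probability.Probability"
begin

text \<open>Vectors of R^d are represented as functions nat => real vanishing outside {0..<d}.\<close>
definition vecs :: "nat \<Rightarrow> (nat \<Rightarrow> real) set" where
  "vecs d = {x. \<forall>j\<ge>d. x j = 0}"

definition dist_d :: "nat \<Rightarrow> (nat \<Rightarrow> real) \<Rightarrow> (nat \<Rightarrow> real) \<Rightarrow> real" where
  "dist_d d x y = sqrt (\<Sum>j<d. (x j - y j)\<^sup>2)"

definition Lip :: "nat \<Rightarrow> ((nat \<Rightarrow> real) \<Rightarrow> real) \<Rightarrow> real" where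
  "Lip d f = Sup {\<bar>f x - f y\<bar> / dist_d d x y | x y. x \<in> vecs d \<and> y \<in> vecs d \<and> x \<noteq> y}"

definition relu :: "real \<Rightarrow> real" where
  "relu t = max 0 t"

definition shallow_net ::
  "nat \<Rightarrow> nat \<Rightarrow> (nat \<Rightarrow> nat \<Rightarrow> real) \<Rightarrow> (nat \<Rightarrow> real) \<Rightarrow> (nat \<Rightarrow> real) \<Rightarrow> real
   \<Rightarrow> (nat \<Rightarrow> real) \<Rightarrow> real" where
  "shallow_net d N W0 b0 W1 b1 x =
     (\<Sum>i<N. W1 i * relu ((\<Sum>j<d. W0 i j * x j) + b0 i)) + b1"

datatype param = PW0 nat nat | PW1 nat | PB0 nat | PB1

definition params :: "nat \<Rightarrow> nat \<Rightarrow> param set" where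
  "params d N = {PW0 i j | i j. i < N \<and> j < d} \<union> {PW1 i | i. i < N}
                \<union> {PB0 i | i. i < N} \<union> {PB1}"

definition gaussian :: "real \<Rightarrow> real \<Rightarrow> real measure" where
  "gaussian \<mu> \<sigma> = density lborel (normal_density \<mu> \<sigma>)"

definition param_law :: "nat \<Rightarrow> (nat \<Rightarrow> real measure) \<Rightarrow> real measure \<Rightarrow> param \<Rightarrow> real measure" where
  "param_law N D0 D1 k = (case k of
       PW0 i j \<Rightarrow> gaussian 0 (sqrt (2 / real N))
     | PW1 i \<Rightarrow> gaussian 0 1
     | PB0 i \<Rightarrow> D0 i
     | PB1 \<Rightarrow> D1)"

definition net_space :: "nat \<Rightarrow> nat \<Rightarrow> (nat \<Rightarrow> real measure) \<Rightarrow> real measure \<Rightarrow> (param \<Rightarrow> real) measure" where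
  "net_space d N D0 D1 = PiM (params d N) (param_law N D0 D1)"

definition rand_net :: "nat \<Rightarrow> nat \<Rightarrow> (param \<Rightarrow> real) \<Rightarrow> (nat \<Rightarrow> real) \<Rightarrow> real" where
  "rand_net d N \<omega> = shallow_net d N (\<lambda>i j. \<omega> (PW0 i j)) (\<lambda>i. \<omega> (PB0 i)) (\<lambda>i. \<omega> (PW1 i)) (\<omega> PB1)"

end

theory Submission
  imports Defs
begin

text \<open>
  Write \<open>v = W1 W0 \<in> R\<^sup>d\<close>. Since \<open>ReLU(p + b) - ReLU(-p + b) = p\<close> up to an error of at most
  \<open>|b|\<close>, the network satisfies \<open>\<Phi>(x) - \<Phi>(-x) = \<langle>v, x\<rangle>\<close> up to an error independent of \<open>x\<close>;
  testing the Lipschitz quotient at \<open>\<plusminus>t v\<close> for large \<open>t\<close> gives \<open>Lip \<Phi> \<ge> |v| / 4\<close>, whatever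
  the biases are.

  Given \<open>W1\<close>, the coordinates of \<open>v\<close> are independent centred Gaussians of variance
  \<open>2 |W1|\<^sup>2 / N\<close>. The variables \<open>min(Z\<^sup>2, 3)\<close> of a standard Gaussian \<open>Z\<close> are bounded with mean
  at least \<open>3/4\<close>, so by Hoeffding's inequality \<open>|W1|\<^sup>2 \<ge> N/2\<close> fails with probability at most
  \<open>exp(-N/72)\<close>, and then \<open>|v|\<^sup>2 \<ge> d/2\<close> fails with conditional probability at most
  \<open>exp(-d/72)\<close>. By Fubini, \<open>Lip \<Phi> \<ge> sqrt d / (4 sqrt 2)\<close> with probability at least
  \<open>(1 - exp(-N/72)) (1 - exp(-d/72))\<close>, which gives both claims with \<open>c = 1/144\<close> and
  \<open>c1 = 9 / (64 sqrt 2)\<close>. Measurability of \<open>Lip \<Phi>\<close> comes from computing it as a supremum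
  over pairs of rational points.
\<close>

section \<open>Lipschitz constants and their measurability\<close>

lemma relu_abs_diff_le: "\<bar>relu a - relu b\<bar> \<le> \<bar>a - b\<bar>"
  unfolding relu_def by auto

lemma dist_d_eq_L2_set: "dist_d d x y = L2_set (\<lambda>j. x j - y j) {..<d}"
  unfolding dist_d_def L2_set_def ..

lemma dist_d_pos:
  assumes "x \<in> vecs d" "y \<in> vecs d" "x \<noteq> y"
  shows "0 < dist_d d x y"
proof -
  obtain j where j: "x j \<noteq> y j" using assms(3) by auto
  have "j < d"
  proof (rule ccontr)
    assume "\<not> j < d"
    with assms(1,2) have "x j = 0" "y j = 0" by (auto simp: vecs_def)
    with j show False by simp
  qed
  then have "(x j - y j)\<^sup>2 \<le> (\<Sum>j<d. (x j - y j)\<^sup>2)"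
    by (intro member_le_sum) auto
  moreover have "0 < (x j - y j)\<^sup>2" using j by simp
  ultimately have "0 < (\<Sum>j<d. (x j - y j)\<^sup>2)" by linarith
  then show ?thesis unfolding dist_d_def by simp
qed

lemma tendsto_dist_d:
  assumes "\<And>j. (\<lambda>n. X n j) \<longlonglongrightarrow> x j" "\<And>j. (\<lambda>n. Y n j) \<longlonglongrightarrow> y j"
  shows "(\<lambda>n. dist_d d (X n) (Y n)) \<longlonglongrightarrow> dist_d d x y"
  unfolding dist_d_def by (intro tendsto_intros assms)

lemma shallow_net_lipschitz:
  "\<bar>shallow_net d N W0 b0 W1 b1 x - shallow_net d N W0 b0 W1 b1 y\<bar>
     \<le> (\<Sum>i<N. \<bar>W1 i\<bar> * L2_set (W0 i) {..<d}) * dist_d d x y"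
proof -
  define a where "a i z = (\<Sum>j<d. W0 i j * z j) + b0 i" for i z
  have neuron: "\<bar>relu (a i x) - relu (a i y)\<bar> \<le> L2_set (W0 i) {..<d} * dist_d d x y" for i
  proof -
    have "\<bar>relu (a i x) - relu (a i y)\<bar> \<le> \<bar>\<Sum>j<d. W0 i j * (x j - y j)\<bar>"
      using relu_abs_diff_le[of "a i x" "a i y"]
      by (simp add: a_def right_diff_distrib sum_subtractf)
    also have "\<dots> \<le> (\<Sum>j<d. \<bar>W0 i j\<bar> * \<bar>x j - y j\<bar>)"
      by (rule order_trans[OF sum_abs]) (simp add: abs_mult)
    also have "\<dots> \<le> L2_set (W0 i) {..<d} * dist_d d x y"
      unfolding dist_d_eq_L2_set by (rule L2_set_mult_ineq)
    finally show ?thesis .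
  qed
  have "\<bar>shallow_net d N W0 b0 W1 b1 x - shallow_net d N W0 b0 W1 b1 y\<bar>
      = \<bar>\<Sum>i<N. W1 i * (relu (a i x) - relu (a i y))\<bar>"
    by (simp add: shallow_net_def a_def right_diff_distrib sum_subtractf)
  also have "\<dots> \<le> (\<Sum>i<N. \<bar>W1 i\<bar> * \<bar>relu (a i x) - relu (a i y)\<bar>)"
    by (rule order_trans[OF sum_abs]) (simp add: abs_mult)
  also have "\<dots> \<le> (\<Sum>i<N. \<bar>W1 i\<bar> * (L2_set (W0 i) {..<d} * dist_d d x y))"
    by (intro sum_mono mult_left_mono neuron) simp
  finally show ?thesis
    by (simp add: sum_distrib_right mult.assoc)
qed

definition lip_quotients ::
  "nat \<Rightarrow> (nat \<Rightarrow> real) set \<Rightarrow> ((nat \<Rightarrow> real) \<Rightarrow> real) \<Rightarrow> real set" where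
  "lip_quotients d S f =
     (\<lambda>(x, y). \<bar>f x - f y\<bar> / dist_d d x y) ` {(x, y) \<in> S \<times> S. x \<noteq> y}"

lemma Lip_eq_Sup_lip_quotients: "Lip d f = Sup (lip_quotients d (vecs d) f)"
  unfolding Lip_def lip_quotients_def by (rule arg_cong[where f = Sup]) auto

lemma bdd_above_lip_quotients:
  assumes lip: "\<And>x y. \<bar>f x - f y\<bar> \<le> K * dist_d d x y" and "S \<subseteq> vecs d"
  shows "bdd_above (lip_quotients d S f)"
proof (rule bdd_aboveI)
  fix r assume "r \<in> lip_quotients d S f"
  then obtain x y where r: "r = \<bar>f x - f y\<bar> / dist_d d x y"
    and "x \<in> vecs d" "y \<in> vecs d" "x \<noteq> y"
    using assms(2) unfolding lip_quotients_def by auto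
  then have "0 < dist_d d x y" by (intro dist_d_pos)
  then show "r \<le> K" unfolding r using lip by (simp add: divide_le_eq)
qed

lemma Lip_ge_quotient:
  assumes lip: "\<And>x y. \<bar>f x - f y\<bar> \<le> K * dist_d d x y"
    and "x \<in> vecs d" "y \<in> vecs d" "x \<noteq> y"
  shows "\<bar>f x - f y\<bar> / dist_d d x y \<le> Lip d f"
  unfolding Lip_eq_Sup_lip_quotients
  by (rule cSup_upper[OF _ bdd_above_lip_quotients[OF lip]])
    (use assms(2-4) in \<open>auto simp: lip_quotients_def\<close>)

definition rat_vecs :: "nat \<Rightarrow> (nat \<Rightarrow> real) set" where
  "rat_vecs d = {x \<in> vecs d. \<forall>j. x j \<in> \<rat>}"

lemma countable_rat_vecs: "countable (rat_vecs d)"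
proof -
  have "rat_vecs d \<subseteq> (\<lambda>rs j. if j < d then of_rat (rs ! j) else 0) ` UNIV"
  proof
    fix x assume x: "x \<in> rat_vecs d"
    then have "\<forall>j. \<exists>r. x j = of_rat r" unfolding rat_vecs_def by (auto elim!: Rats_cases)
    then obtain r where r: "\<And>j. x j = of_rat (r j)" by metis
    have "x = (\<lambda>j. if j < d then of_rat (map r [0..<d] ! j) else 0)"
      using x r by (auto simp: rat_vecs_def vecs_def)
    then show "x \<in> (\<lambda>rs j. if j < d then of_rat (rs ! j) else 0) ` UNIV" by blast
  qed
  then show ?thesis
    by (rule countable_subset) simp
qed

lemma floor_scaled_LIMSEQ: "(\<lambda>n. of_int \<lfloor>z * real (Suc n)\<rfloor> / real (Suc n)) \<longlonglongrightarrow> (z::real)"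
proof (rule real_tendsto_sandwich)
  show "\<forall>\<^sub>F n in sequentially. z - 1 / real (Suc n) \<le> of_int \<lfloor>z * real (Suc n)\<rfloor> / real (Suc n)"
  proof (intro always_eventually allI)
    fix n
    have "z * real (Suc n) - 1 \<le> of_int \<lfloor>z * real (Suc n)\<rfloor>"
      using real_of_int_floor_add_one_gt[of "z * real (Suc n)"] by linarith
    then show "z - 1 / real (Suc n) \<le> of_int \<lfloor>z * real (Suc n)\<rfloor> / real (Suc n)"
      by (simp add: le_divide_eq left_diff_distrib)
  qed
  show "\<forall>\<^sub>F n in sequentially. of_int \<lfloor>z * real (Suc n)\<rfloor> / real (Suc n) \<le> z"
    by (intro always_eventually allI) (simp add: divide_le_eq)
  show "(\<lambda>n. z - 1 / real (Suc n)) \<longlonglongrightarrow> z"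
    using tendsto_diff[OF tendsto_const LIMSEQ_inverse_real_of_nat, of z]
    by (simp add: inverse_eq_divide)
qed simp

lemma rat_vecs_approx:
  assumes "x \<in> vecs d"
  obtains X where "\<And>n. X n \<in> rat_vecs d" "\<And>j. (\<lambda>n. X n j) \<longlonglongrightarrow> x j"
proof
  define X where "X n j = of_int \<lfloor>x j * real (Suc n)\<rfloor> / real (Suc n)" for n j
  show "X n \<in> rat_vecs d" for n
    using assms by (auto simp: X_def rat_vecs_def vecs_def)
  show "(\<lambda>n. X n j) \<longlonglongrightarrow> x j" for j
    unfolding X_def by (rule floor_scaled_LIMSEQ)
qed

lemma lip_quotient_approx_rat:
  assumes lip: "\<And>x y. \<bar>f x - f y\<bar> \<le> K * dist_d d x y"
    and xy: "x \<in> vecs d" "y \<in> vecs d" "x \<noteq> y" and "0 < e"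
  shows "\<exists>r \<in> lip_quotients d (rat_vecs d) f. \<bar>f x - f y\<bar> / dist_d d x y - e < r"
proof -
  obtain X where X: "\<And>n. X n \<in> rat_vecs d" "\<And>j. (\<lambda>n. X n j) \<longlonglongrightarrow> x j"
    using rat_vecs_approx[OF xy(1)] by blast
  obtain Y where Y: "\<And>n. Y n \<in> rat_vecs d" "\<And>j. (\<lambda>n. Y n j) \<longlonglongrightarrow> y j"
    using rat_vecs_approx[OF xy(2)] by blast
  have f_conv: "(\<lambda>n. f (Z n)) \<longlonglongrightarrow> f z" if Z: "\<And>j. (\<lambda>n. Z n j) \<longlonglongrightarrow> z j" for Z z
  proof -
    have "(\<lambda>n. K * dist_d d (Z n) z) \<longlonglongrightarrow> K * dist_d d z z"
      by (intro tendsto_mult tendsto_const tendsto_dist_d Z)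
    then have "(\<lambda>n. K * dist_d d (Z n) z) \<longlonglongrightarrow> 0"
      by (simp add: dist_d_def)
    then have "(\<lambda>n. f (Z n) - f z) \<longlonglongrightarrow> 0"
      by (rule Lim_null_comparison[rotated]) (intro always_eventually allI, use lip in simp)
    then show ?thesis by (simp add: LIM_zero_iff)
  qed
  have dist_pos: "0 < dist_d d x y" by (rule dist_d_pos[OF xy(1-3)])
  have dist_conv: "(\<lambda>n. dist_d d (X n) (Y n)) \<longlonglongrightarrow> dist_d d x y"
    by (rule tendsto_dist_d[OF X(2) Y(2)])
  have "(\<lambda>n. \<bar>f (X n) - f (Y n)\<bar> / dist_d d (X n) (Y n)) \<longlonglongrightarrow> \<bar>f x - f y\<bar> / dist_d d x y"
    using dist_pos by (intro tendsto_intros f_conv X(2) Y(2) dist_conv) simp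
  then have "\<forall>\<^sub>F n in sequentially.
      \<bar>f x - f y\<bar> / dist_d d x y - e < \<bar>f (X n) - f (Y n)\<bar> / dist_d d (X n) (Y n)
      \<and> 0 < dist_d d (X n) (Y n)"
    using \<open>0 < e\<close> by (intro eventually_conj order_tendstoD(1)[OF dist_conv dist_pos]
        order_tendstoD(1)) auto
  then obtain n where n: "\<bar>f x - f y\<bar> / dist_d d x y - e < \<bar>f (X n) - f (Y n)\<bar> / dist_d d (X n) (Y n)"
    and "0 < dist_d d (X n) (Y n)"
    by (auto simp: eventually_sequentially)
  then have "X n \<noteq> Y n" by (auto simp: dist_d_def)
  with X(1) Y(1) have "\<bar>f (X n) - f (Y n)\<bar> / dist_d d (X n) (Y n) \<in> lip_quotients d (rat_vecs d) f"
    unfolding lip_quotients_def by (intro rev_image_eqI[of "(X n, Y n)"]) auto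
  with n show ?thesis by blast
qed

lemma Lip_eq_Sup_rat_quotients:
  assumes lip: "\<And>x y. \<bar>f x - f y\<bar> \<le> K * dist_d d x y"
  shows "Lip d f = Sup (lip_quotients d (rat_vecs d) f)"
proof -
  have rat_sub: "lip_quotients d (rat_vecs d) f \<subseteq> lip_quotients d (vecs d) f"
    unfolding lip_quotients_def rat_vecs_def by auto
  show ?thesis
  proof (cases "lip_quotients d (vecs d) f = {}")
    case True
    with rat_sub show ?thesis by (simp add: Lip_eq_Sup_lip_quotients)
  next
    case False
    have bdd: "bdd_above (lip_quotients d (vecs d) f)"
      by (rule bdd_above_lip_quotients[OF lip]) simp
    have rat_ne: "lip_quotients d (rat_vecs d) f \<noteq> {}"
    proof -
      from False obtain x y where "x \<in> vecs d" "y \<in> vecs d" "x \<noteq> y"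
        unfolding lip_quotients_def by auto
      from lip_quotient_approx_rat[OF lip this zero_less_one] show ?thesis by blast
    qed
    have "Sup (lip_quotients d (vecs d) f) \<le> Sup (lip_quotients d (rat_vecs d) f)"
    proof (rule cSup_least[OF False])
      fix r assume "r \<in> lip_quotients d (vecs d) f"
      then obtain x y where r: "r = \<bar>f x - f y\<bar> / dist_d d x y"
        and xy: "x \<in> vecs d" "y \<in> vecs d" "x \<noteq> y"
        unfolding lip_quotients_def by auto
      show "r \<le> Sup (lip_quotients d (rat_vecs d) f)"
      proof (rule field_le_epsilon)
        fix e :: real assume "0 < e"
        from lip_quotient_approx_rat[OF lip xy this]
        obtain r' where "r' \<in> lip_quotients d (rat_vecs d) f" "r - e < r'"
          unfolding r by blast
        moreover have "bdd_above (lip_quotients d (rat_vecs d) f)"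
          by (rule bdd_above_mono[OF bdd rat_sub])
        ultimately show "r \<le> Sup (lip_quotients d (rat_vecs d) f) + e"
          using cSup_upper by fastforce
      qed
    qed
    moreover have "Sup (lip_quotients d (rat_vecs d) f) \<le> Sup (lip_quotients d (vecs d) f)"
      by (rule cSup_subset_mono[OF rat_ne bdd rat_sub])
    ultimately show ?thesis by (simp add: Lip_eq_Sup_lip_quotients)
  qed
qed

lemma borel_measurable_Lip:
  assumes lip: "\<And>\<omega> x y. \<bar>F \<omega> x - F \<omega> y\<bar> \<le> K \<omega> * dist_d d x y"
    and meas: "\<And>x. (\<lambda>\<omega>. F \<omega> x) \<in> borel_measurable M"
  shows "(\<lambda>\<omega>. Lip d (F \<omega>)) \<in> borel_measurable M"
  unfolding Lip_eq_Sup_rat_quotients[OF lip] lip_quotients_def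
proof (rule borel_measurable_cSUP)
  show "countable {(x, y) \<in> rat_vecs d \<times> rat_vecs d. x \<noteq> y}"
    by (rule countable_subset[OF _ countable_SIGMA[OF countable_rat_vecs countable_rat_vecs]]) auto
  show "(\<lambda>\<omega>. case p of (x, y) \<Rightarrow> \<bar>F \<omega> x - F \<omega> y\<bar> / dist_d d x y) \<in> borel_measurable M" for p
    by (cases p) (auto intro!: borel_measurable_divide borel_measurable_abs borel_measurable_diff meas)
  show "bdd_above ((\<lambda>(x, y). \<bar>F \<omega> x - F \<omega> y\<bar> / dist_d d x y) ` {(x, y) \<in> rat_vecs d \<times> rat_vecs d. x \<noteq> y})" for \<omega>
  proof -
    have "rat_vecs d \<subseteq> vecs d" by (auto simp: rat_vecs_def)
    from bdd_above_lip_quotients[OF lip[of \<omega>] this] show ?thesis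
      unfolding lip_quotients_def .
  qed
qed

section \<open>A lower bound for a fixed network\<close>

lemma relu_antipodal_abs_le: "\<bar>relu (p + b) - relu (- p + b) - p\<bar> \<le> \<bar>b\<bar>"
  unfolding relu_def by auto

lemma shallow_net_odd_part:
  "\<bar>shallow_net d N W0 b0 W1 b1 x - shallow_net d N W0 b0 W1 b1 (\<lambda>j. - x j)
      - (\<Sum>j<d. (\<Sum>i<N. W1 i * W0 i j) * x j)\<bar> \<le> (\<Sum>i<N. \<bar>W1 i\<bar> * \<bar>b0 i\<bar>)"
proof -
  define a where "a i = (\<Sum>j<d. W0 i j * x j)" for i
  have "(\<Sum>j<d. (\<Sum>i<N. W1 i * W0 i j) * x j) = (\<Sum>i<N. W1 i * a i)"
    unfolding a_def sum_distrib_left sum_distrib_right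
    by (subst sum.swap) (simp add: mult.assoc)
  moreover have "shallow_net d N W0 b0 W1 b1 x - shallow_net d N W0 b0 W1 b1 (\<lambda>j. - x j)
      = (\<Sum>i<N. W1 i * (relu (a i + b0 i) - relu (- a i + b0 i)))"
    by (simp add: shallow_net_def a_def sum_negf right_diff_distrib sum_subtractf)
  ultimately have "\<bar>shallow_net d N W0 b0 W1 b1 x - shallow_net d N W0 b0 W1 b1 (\<lambda>j. - x j)
      - (\<Sum>j<d. (\<Sum>i<N. W1 i * W0 i j) * x j)\<bar>
      = \<bar>\<Sum>i<N. W1 i * (relu (a i + b0 i) - relu (- a i + b0 i) - a i)\<bar>"
    by (simp add: right_diff_distrib sum_subtractf)
  also have "\<dots> \<le> (\<Sum>i<N. \<bar>W1 i\<bar> * \<bar>relu (a i + b0 i) - relu (- a i + b0 i) - a i\<bar>)"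
    by (rule order_trans[OF sum_abs]) (simp add: abs_mult)
  also have "\<dots> \<le> (\<Sum>i<N. \<bar>W1 i\<bar> * \<bar>b0 i\<bar>)"
    by (intro sum_mono mult_left_mono relu_antipodal_abs_le) simp
  finally show ?thesis .
qed

text \<open>The witness is the pair \<open>\<plusminus>x\<close> with \<open>x = t v\<close>: the choice \<open>t = 2B/q + 1\<close> makes the bias
  error \<open>B\<close> at most half of \<open>\<langle>v, x\<rangle> = t q\<close>, while \<open>|x - (-x)| = 2 t sqrt q\<close>.\<close>
lemma Lip_shallow_net_ge:
  assumes "0 < (\<Sum>j<d. (\<Sum>i<N. W1 i * W0 i j)\<^sup>2)"
  shows "sqrt (\<Sum>j<d. (\<Sum>i<N. W1 i * W0 i j)\<^sup>2) / 4 \<le> Lip d (shallow_net d N W0 b0 W1 b1)"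
proof -
  define F where "F = shallow_net d N W0 b0 W1 b1"
  define v where "v j = (\<Sum>i<N. W1 i * W0 i j)" for j
  define q where "q = (\<Sum>j<d. (v j)\<^sup>2)"
  define B where "B = (\<Sum>i<N. \<bar>W1 i\<bar> * \<bar>b0 i\<bar>)"
  define t where "t = 2 * B / q + 1"
  define x where "x j = (if j < d then t * v j else 0)" for j
  have q: "0 < q" using assms by (simp add: q_def v_def)
  have "0 \<le> B" by (simp add: B_def sum_nonneg)
  with q have t: "0 < t" "B \<le> t * q / 2"
    by (auto simp: t_def add_pos_nonneg field_simps)
  have x_vecs: "x \<in> vecs d" "(\<lambda>j. - x j) \<in> vecs d" by (auto simp: vecs_def x_def)
  have "(\<Sum>j<d. v j * x j) = t * q"
    by (simp add: x_def q_def power2_eq_square sum_distrib_left mult_ac)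
  with shallow_net_odd_part[of d N W0 b0 W1 b1 x] t(2)
  have num: "t * q / 2 \<le> \<bar>F x - F (\<lambda>j. - x j)\<bar>"
    by (simp add: F_def B_def v_def abs_le_iff)
  have "(\<Sum>j<d. (x j - - x j)\<^sup>2) = (2 * t)\<^sup>2 * q"
    by (simp add: x_def q_def sum_distrib_left power_mult_distrib mult.assoc)
  with t(1) have dist: "dist_d d x (\<lambda>j. - x j) = 2 * t * sqrt q"
    by (simp add: dist_d_def real_sqrt_mult)
  have "x \<noteq> (\<lambda>j. - x j)"
  proof
    assume "x = (\<lambda>j. - x j)"
    then have "dist_d d x (\<lambda>j. - x j) = dist_d d x x" by (simp only: flip: \<open>x = _\<close>)
    with dist t(1) q show False by (simp add: dist_d_def)
  qed
  have "sqrt q / 4 = (t * q / 2) / (2 * t * sqrt q)"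
    using t(1) q by (simp add: field_simps)
  also have "\<dots> \<le> \<bar>F x - F (\<lambda>j. - x j)\<bar> / dist_d d x (\<lambda>j. - x j)"
    unfolding dist using num t(1) q by (intro divide_right_mono) simp_all
  also have "\<dots> \<le> Lip d F"
    unfolding F_def by (rule Lip_ge_quotient[OF shallow_net_lipschitz x_vecs \<open>x \<noteq> _\<close>])
  finally show ?thesis by (simp add: F_def q_def v_def)
qed

lemma Lip_shallow_net_ge_of_truncated_sums:
  fixes W0 :: "nat \<Rightarrow> nat \<Rightarrow> real" and W1 :: "nat \<Rightarrow> real"
  assumes "1 \<le> d" "1 \<le> N"
    and W1: "real N / 2 \<le> (\<Sum>i<N. min ((W1 i)\<^sup>2) 3)"
    and W0: "real d / 2 \<le> (\<Sum>j<d. min (((\<Sum>i<N. W1 i * W0 i j)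
               / sqrt (2 / real N * (\<Sum>i<N. (W1 i)\<^sup>2)))\<^sup>2) 3)"
  shows "sqrt (real d) / (4 * sqrt 2) \<le> Lip d (shallow_net d N W0 b0 W1 b1)"
proof -
  define s2 where "s2 = 2 / real N * (\<Sum>i<N. (W1 i)\<^sup>2)"
  define q where "q = (\<Sum>j<d. (\<Sum>i<N. W1 i * W0 i j)\<^sup>2)"
  have "(\<Sum>i<N. min ((W1 i)\<^sup>2) 3) \<le> (\<Sum>i<N. (W1 i)\<^sup>2)"
    by (intro sum_mono) simp
  with W1 \<open>1 \<le> N\<close> have s2: "1 \<le> s2"
    by (simp add: s2_def field_simps)
  have "real d / 2 \<le> (\<Sum>j<d. (\<Sum>i<N. W1 i * W0 i j)\<^sup>2 / s2)"
    using W0 s2 unfolding s2_def[symmetric]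
    by (elim order_trans, intro sum_mono) (simp add: power_divide)
  also have "\<dots> = q / s2" by (simp add: q_def sum_divide_distrib)
  also have "\<dots> \<le> q"
    using s2 sum_nonneg[of "{..<d}" "\<lambda>j. (\<Sum>i<N. W1 i * W0 i j)\<^sup>2"]
    by (simp add: q_def divide_le_eq mult_le_cancel_left1)
  finally have q: "real d / 2 \<le> q" .
  have "sqrt (real d) / (4 * sqrt 2) = sqrt (real d / 2) / 4"
    by (simp add: real_sqrt_divide)
  also have "\<dots> \<le> sqrt q / 4" using q by simp
  also have "\<dots> \<le> Lip d (shallow_net d N W0 b0 W1 b1)"
    using q \<open>1 \<le> d\<close> unfolding q_def by (intro Lip_shallow_net_ge) simp
  finally show ?thesis .
qed

section \<open>Sums of truncated Gaussian squares\<close>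

lemma quadratic_le_min_3: "0 \<le> (a::real) \<Longrightarrow> a - a\<^sup>2 / 12 \<le> min a 3"
  using sum_power2_ge_zero[of "a - 6" 0] by (simp add: power2_eq_square field_simps)

text \<open>\<open>E min(Z\<^sup>2, 3) \<ge> E Z\<^sup>2 - E Z\<^sup>4 / 12 = 1 - 3/12\<close> for a standard normal \<open>Z\<close>.\<close>
lemma std_normal_truncated_square_integral_ge:
  "3 / 4 \<le> (\<integral>z. std_normal_density z * min (z\<^sup>2) 3 \<partial>lborel)"
proof -
  have m2: "integrable lborel (\<lambda>z. std_normal_density z * z ^ 2)"
    "(\<integral>z. std_normal_density z * z ^ 2 \<partial>lborel) = 1"
    using integrable_std_normal_moment[of 2] integral_std_normal_moment_even[of 1] by simp_all
  have m4: "integrable lborel (\<lambda>z. std_normal_density z * z ^ 4)"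
    "(\<integral>z. std_normal_density z * z ^ 4 \<partial>lborel) = 3"
    using integrable_std_normal_moment[of 4] integral_std_normal_moment_even[of 2]
    by (simp_all add: fact_numeral)
  have "integrable lborel (\<lambda>z. std_normal_density z * min (z\<^sup>2) 3)"
  proof (rule Bochner_Integration.integrable_bound[where f = "\<lambda>z. std_normal_density z * 3"])
    show "AE z in lborel. norm (std_normal_density z * min (z\<^sup>2) 3) \<le> norm (std_normal_density z * 3)"
      by (intro AE_I2) (simp add: abs_mult normal_density_nonneg mult_left_mono)
  qed simp_all
  then have "(\<integral>z. std_normal_density z * z ^ 2 - std_normal_density z * z ^ 4 / 12 \<partial>lborel)
      \<le> (\<integral>z. std_normal_density z * min (z\<^sup>2) 3 \<partial>lborel)"
  proof (rule integral_mono[OF Bochner_Integration.integrable_diff[OF m2(1) integrable_divide[OF m4(1)]]])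
    fix z :: real
    have "std_normal_density z * (z\<^sup>2 - (z\<^sup>2)\<^sup>2 / 12) \<le> std_normal_density z * min (z\<^sup>2) 3"
      by (intro mult_left_mono quadratic_le_min_3) simp_all
    then show "std_normal_density z * z ^ 2 - std_normal_density z * z ^ 4 / 12
        \<le> std_normal_density z * min (z\<^sup>2) 3"
      by (simp add: right_diff_distrib flip: power_mult)
  qed
  with m2 m4 show ?thesis by (simp add: integral_diff integral_divide)
qed

lemma (in prob_space) expectation_truncated_square_normal_ge:
  assumes "0 < \<sigma>" and "distributed M lborel Y (normal_density 0 \<sigma>)"
  shows "3 / 4 \<le> expectation (\<lambda>x. min ((Y x / \<sigma>)\<^sup>2) 3)"
proof -
  have "distributed M lborel (\<lambda>x. Y x / \<sigma>) std_normal_density"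
    using normal_standard_normal_convert[OF assms(1)] assms(2) by simp
  then have "(\<integral>z. std_normal_density z * min (z\<^sup>2) 3 \<partial>lborel)
      = expectation (\<lambda>x. min ((Y x / \<sigma>)\<^sup>2) 3)"
    by (rule distributed_integral) (simp_all add: normal_density_nonneg)
  with std_normal_truncated_square_integral_ge show ?thesis by simp
qed

text \<open>Hoeffding's inequality for the summands in \<open>[0, 3]\<close> with deviation \<open>n/4\<close> below their mean
  (which is at least \<open>3n/4\<close>) gives the exponent \<open>2 (n/4)\<^sup>2 / (9 n) = n / 72\<close>.\<close>
lemma (in prob_space) prob_truncated_square_sum_ge:
  assumes "finite I" and indep: "indep_vars (\<lambda>_. borel) Y I"
    and "0 < \<sigma>" and Y: "\<And>i. i \<in> I \<Longrightarrow> distributed M lborel (Y i) (normal_density 0 \<sigma>)"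
  shows "1 - exp (- real (card I) / 72)
    \<le> prob {x \<in> space M. real (card I) / 2 \<le> (\<Sum>i\<in>I. min ((Y i x / \<sigma>)\<^sup>2) 3)}"
proof (cases "I = {}")
  case True
  then show ?thesis by simp
next
  case False
  define n where "n = real (card I)"
  define X where "X i x = min ((Y i x / \<sigma>)\<^sup>2) 3" for i x
  have n: "0 < n" using \<open>finite I\<close> False by (simp add: n_def card_gt_0_iff)
  interpret H: Hoeffding_ineq M I X "\<lambda>_. 0" "\<lambda>_. 3" "\<Sum>i\<in>I. expectation (X i)"
  proof unfold_locales
    show "indep_vars (\<lambda>_. borel) X I"
      unfolding X_def by (rule indep_vars_compose2[OF indep]) simp
  qed (use \<open>finite I\<close> in \<open>simp_all add: X_def\<close>)
  have "(\<Sum>i\<in>I. 3 / 4) \<le> (\<Sum>i\<in>I. expectation (X i))"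
    unfolding X_def by (intro sum_mono expectation_truncated_square_normal_ge[OF \<open>0 < \<sigma>\<close> Y])
  then have mean: "3 / 4 * n \<le> (\<Sum>i\<in>I. expectation (X i))"
    by (simp add: n_def)
  have "prob {x \<in> space M. (\<Sum>i\<in>I. X i x) \<le> (\<Sum>i\<in>I. expectation (X i)) - n / 4}
      \<le> exp (- 2 * (n / 4)\<^sup>2 / (\<Sum>i\<in>I. (3 - 0)\<^sup>2))"
    using n by (intro H.Hoeffding_ineq_le) (simp_all add: n_def)
  also have "\<dots> = exp (- n / 72)"
    using n by (simp add: n_def power2_eq_square)
  finally have bad: "prob {x \<in> space M. (\<Sum>i\<in>I. X i x) \<le> (\<Sum>i\<in>I. expectation (X i)) - n / 4}
      \<le> exp (- n / 72)" .
  have [measurable]: "(\<lambda>x. \<Sum>i\<in>I. X i x) \<in> borel_measurable M"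
    by (intro borel_measurable_sum H.random_variable)
  have "1 - prob {x \<in> space M. (\<Sum>i\<in>I. X i x) \<le> (\<Sum>i\<in>I. expectation (X i)) - n / 4}
      = prob (space M - {x \<in> space M. (\<Sum>i\<in>I. X i x) \<le> (\<Sum>i\<in>I. expectation (X i)) - n / 4})"
    by (rule prob_compl[symmetric]) measurable
  also have "\<dots> \<le> prob {x \<in> space M. n / 2 \<le> (\<Sum>i\<in>I. X i x)}"
    using mean by (intro finite_measure_mono) auto
  finally have "1 - exp (- n / 72) \<le> prob {x \<in> space M. n / 2 \<le> (\<Sum>i\<in>I. X i x)}"
    using bad by linarith
  then show ?thesis by (simp add: X_def n_def)
qed

lemma (in prob_space) distributed_weighted_sum_indep_normal:
  assumes "finite I" and indep: "indep_vars (\<lambda>_. borel) X I" and "0 < \<sigma>"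
    and X: "\<And>i. i \<in> I \<Longrightarrow> distributed M lborel (X i) (normal_density 0 \<sigma>)"
    and "\<exists>i\<in>I. a i \<noteq> 0"
  shows "distributed M lborel (\<lambda>x. \<Sum>i\<in>I. a i * X i x)
    (normal_density 0 (\<sigma> * sqrt (\<Sum>i\<in>I. (a i)\<^sup>2)))"
proof -
  define I' where "I' = {i \<in> I. a i \<noteq> 0}"
  have sum_I': "(\<Sum>i\<in>I'. f i) = (\<Sum>i\<in>I. f i)" if "\<And>i. a i = 0 \<Longrightarrow> f i = 0" for f :: "_ \<Rightarrow> real"
    using \<open>finite I\<close> that by (intro sum.mono_neutral_left) (auto simp: I'_def)
  have "distributed M lborel (\<lambda>x. \<Sum>i\<in>I'. a i * X i x)
      (normal_density (\<Sum>i\<in>I'. 0) (sqrt (\<Sum>i\<in>I'. (\<bar>a i\<bar> * \<sigma>)\<^sup>2)))"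
  proof (rule sum_indep_normal)
    show "finite I'" "I' \<noteq> {}" using assms(1,5) by (auto simp: I'_def)
    show "indep_vars (\<lambda>_. borel) (\<lambda>i x. a i * X i x) I'"
      by (rule indep_vars_compose2[OF indep_vars_subset[OF indep]]) (auto simp: I'_def)
    fix i assume "i \<in> I'"
    then show "0 < \<bar>a i\<bar> * \<sigma>" using \<open>0 < \<sigma>\<close> by (simp add: I'_def)
    from \<open>i \<in> I'\<close> normal_density_affine[OF X \<open>0 < \<sigma>\<close>, of i "a i" 0]
    show "distributed M lborel (\<lambda>x. a i * X i x) (normal_density 0 (\<bar>a i\<bar> * \<sigma>))"
      by (simp add: I'_def)
  qed
  moreover have "(\<Sum>i\<in>I'. (\<bar>a i\<bar> * \<sigma>)\<^sup>2) = \<sigma>\<^sup>2 * (\<Sum>i\<in>I. (a i)\<^sup>2)"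
    by (subst sum_I') (simp_all add: power_mult_distrib sum_distrib_left mult.commute)
  ultimately show ?thesis
    using \<open>0 < \<sigma>\<close> by (simp add: sum_I' real_sqrt_mult)
qed

section \<open>Finite products of probability spaces\<close>

lemma nn_integral_ge_mult_emeasure:
  assumes "A \<in> sets M" and "\<And>x. x \<in> A \<Longrightarrow> c \<le> f x"
  shows "c * emeasure M A \<le> (\<integral>\<^sup>+x. f x \<partial>M)"
proof -
  have "c * emeasure M A = (\<integral>\<^sup>+x. c * indicator A x \<partial>M)"
    by (rule nn_integral_cmult_indicator[OF assms(1), symmetric])
  also have "\<dots> \<le> (\<integral>\<^sup>+x. f x \<partial>M)"
    using assms(2) by (intro nn_integral_mono) (simp split: split_indicator)
  finally show ?thesis .
qed

lemma indep_vars_PiM_components: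
  assumes M: "\<And>k. prob_space (M k)" and "J \<noteq> {}"
  shows "prob_space.indep_vars (PiM J M) M (\<lambda>k \<omega>. \<omega> k) J"
proof -
  interpret prob_space "PiM J M" by (rule prob_space_PiM) (rule M)
  have "distr (PiM J M) (PiM J M) (\<lambda>\<omega>. \<lambda>k\<in>J. \<omega> k) = distr (PiM J M) (PiM J M) (\<lambda>\<omega>. \<omega>)"
    by (rule distr_cong) (auto simp: space_PiM)
  moreover have "PiM J (\<lambda>k. distr (PiM J M) (M k) (\<lambda>\<omega>. \<omega> k)) = PiM J M"
    by (rule PiM_cong) (auto intro!: distr_PiM_component M)
  ultimately show ?thesis
    using \<open>J \<noteq> {}\<close> by (subst indep_vars_iff_distr_eq_PiM') simp_all
qed

lemma indep_vars_PiM_blocks: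
  assumes M: "\<And>k. prob_space (M k)" and "J \<noteq> {}"
    and K: "\<And>l. l \<in> L \<Longrightarrow> K l \<subseteq> J" and "disjoint_family_on K L"
    and g: "\<And>l. l \<in> L \<Longrightarrow> g l \<in> borel_measurable (PiM (K l) M)"
  shows "prob_space.indep_vars (PiM J M) (\<lambda>_. borel) (\<lambda>l \<omega>. g l (restrict \<omega> (K l))) L"
proof -
  interpret prob_space "PiM J M" by (rule prob_space_PiM) (rule M)
  have "indep_vars (\<lambda>l. PiM (K l) M) (\<lambda>l \<omega>. restrict (\<lambda>k. \<omega> k) (K l)) L"
    by (rule indep_vars_restrict[OF indep_vars_PiM_components[OF M \<open>J \<noteq> {}\<close>]])
      (use K assms(4) in auto)
  from indep_vars_compose2[OF this g] show ?thesis by simp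
qed

lemma distributed_PiM_component:
  assumes "\<And>k. prob_space (M k)" and "k \<in> J"
    and Mk: "M k = density lborel f" and "f \<in> borel_measurable lborel"
  shows "distributed (PiM J M) lborel (\<lambda>\<omega>. \<omega> k) f"
proof -
  have sets_Mk: "sets (M k) = sets lborel" by (simp add: Mk)
  have "distr (PiM J M) lborel (\<lambda>\<omega>. \<omega> k) = distr (PiM J M) (M k) (\<lambda>\<omega>. \<omega> k)"
    by (rule distr_cong) (simp_all add: sets_Mk)
  also have "\<dots> = density lborel f"
    using distr_PiM_component[where M = M, OF assms(1,2)] by (simp add: Mk)
  finally show ?thesis
    unfolding distributed_def
    using measurable_component_singleton[OF \<open>k \<in> J\<close>, of M] assms(4)
    by (simp add: measurable_cong_sets[OF refl sets_Mk])
qed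

text \<open>For \<open>k \<notin> K\<close> the component is the constant \<open>undefined\<close> on the product space.\<close>
lemma borel_measurable_PiM_component:
  assumes "\<And>k. sets (M k) = sets borel"
  shows "(\<lambda>\<omega>. \<omega> k) \<in> borel_measurable (PiM K M)"
proof (cases "k \<in> K")
  case True
  with measurable_component_singleton[OF this, of M] show ?thesis
    by (simp add: measurable_cong_sets[OF refl assms])
next
  case False
  then have "\<And>\<omega>. \<omega> \<in> space (PiM K M) \<Longrightarrow> \<omega> k = undefined"
    by (auto simp: space_PiM PiE_def extensional_def)
  then show ?thesis
    by (subst measurable_cong[where g = "\<lambda>_. undefined"]) simp_all
qed

lemma measure_PiM_ge_mult_sections:
  assumes M: "\<And>k. prob_space (M k)" and "I \<inter> J = {}" "finite I" "finite J"
    and E: "E \<in> sets (PiM (I \<union> J) M)" and A: "A \<in> sets (PiM I M)"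
    and B: "\<And>x. x \<in> A \<Longrightarrow> B x \<in> sets (PiM J M)"
    and q: "0 \<le> q" "\<And>x. x \<in> A \<Longrightarrow> q \<le> measure (PiM J M) (B x)"
    and AB: "\<And>x y. x \<in> A \<Longrightarrow> y \<in> B x \<Longrightarrow> merge I J (x, y) \<in> E"
  shows "measure (PiM I M) A * q \<le> measure (PiM (I \<union> J) M) E"
proof -
  interpret product_prob_space M by (rule product_prob_spaceI) (rule M)
  have "prob_space (PiM K M)" for K by (rule prob_space_PiM) (rule M)
  then have finite_PiM: "finite_measure (PiM K M)" for K by (simp add: prob_space_def)
  have emeasure_PiM: "emeasure (PiM K M) X = measure (PiM K M) X" for K X
    by (rule finite_measure.emeasure_eq_measure[OF finite_PiM])
  define S where "S x = (\<lambda>y. merge I J (x, y)) -` E \<inter> space (PiM J M)" for x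
  have "ennreal q \<le> emeasure (PiM J M) (S x)" if x: "x \<in> A" for x
  proof -
    have "x \<in> space (PiM I M)" using sets.sets_into_space[OF A] x by blast
    then have "(\<lambda>y. merge I J (x, y)) \<in> measurable (PiM J M) (PiM (I \<union> J) M)"
      by measurable
    from measurable_sets[OF this E] have "S x \<in> sets (PiM J M)" unfolding S_def .
    moreover have "B x \<subseteq> S x"
      using AB[OF x] sets.sets_into_space[OF B[OF x]] by (auto simp: S_def)
    ultimately have "measure (PiM J M) (B x) \<le> measure (PiM J M) (S x)"
      by (intro finite_measure.finite_measure_mono[OF finite_PiM])
    with q(2)[OF x] show ?thesis
      by (simp add: emeasure_PiM)
  qed
  then have "ennreal q * emeasure (PiM I M) A \<le> (\<integral>\<^sup>+x. emeasure (PiM J M) (S x) \<partial>PiM I M)"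
    by (rule nn_integral_ge_mult_emeasure[OF A])
  also have "\<dots> = emeasure (PiM (I \<union> J) M) E"
    unfolding S_def by (rule emeasure_fold_integral[symmetric]) fact+
  finally show ?thesis
    using q(1) by (simp add: emeasure_PiM ennreal_mult'[symmetric] mult.commute)
qed

section \<open>The random network\<close>

lemma prob_space_gaussian: "0 < \<sigma> \<Longrightarrow> prob_space (gaussian \<mu> \<sigma>)"
  unfolding gaussian_def by (rule prob_space_normal_density)

lemma sets_gaussian[simp]: "sets (gaussian \<mu> \<sigma>) = sets borel"
  unfolding gaussian_def by simp

lemma mem_params_iff[simp]:
  "PW0 i j \<in> params d N \<longleftrightarrow> i < N \<and> j < d"
  "PW1 i \<in> params d N \<longleftrightarrow> i < N"
  "PB0 i \<in> params d N \<longleftrightarrow> i < N"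
  "PB1 \<in> params d N"
  unfolding params_def by auto

lemma finite_params: "finite (params d N)"
proof -
  have "params d N \<subseteq> case_prod PW0 ` ({..<N} \<times> {..<d}) \<union> PW1 ` {..<N} \<union> PB0 ` {..<N} \<union> {PB1}"
    unfolding params_def by auto
  then show ?thesis by (rule finite_subset) simp
qed

lemma borel_measurable_Lip_rand_net:
  assumes "\<And>k. sets (M k) = sets borel"
  shows "(\<lambda>\<omega>. Lip d (rand_net d N \<omega>)) \<in> borel_measurable (PiM K M)"
proof (rule borel_measurable_Lip)
  note [measurable] = borel_measurable_PiM_component[OF assms]
  show "(\<lambda>\<omega>. rand_net d N \<omega> x) \<in> borel_measurable (PiM K M)" for x
    unfolding rand_net_def shallow_net_def relu_def by measurable
  show "\<bar>rand_net d N \<omega> x - rand_net d N \<omega> y\<bar>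
      \<le> (\<Sum>i<N. \<bar>\<omega> (PW1 i)\<bar> * L2_set (\<lambda>j. \<omega> (PW0 i j)) {..<d}) * dist_d d x y" for \<omega> x y
    unfolding rand_net_def by (rule shallow_net_lipschitz)
qed

lemma Lip_rand_net_merge_ge:
  assumes "1 \<le> d" "1 \<le> N" and J: "\<And>i j. i < N \<Longrightarrow> j < d \<Longrightarrow> PW0 i j \<in> J"
    and "real N / 2 \<le> (\<Sum>i<N. min ((x (PW1 i))\<^sup>2) 3)"
    and "real d / 2 \<le> (\<Sum>j<d. min (((\<Sum>i<N. x (PW1 i) * y (PW0 i j))
           / sqrt (2 / real N * (\<Sum>i<N. (x (PW1 i))\<^sup>2)))\<^sup>2) 3)"
  shows "sqrt (real d) / (4 * sqrt 2) \<le> Lip d (rand_net d N (merge (PW1 ` {..<N}) J (x, y)))"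
proof -
  let ?z = "merge (PW1 ` {..<N}) J (x, y)"
  have "?z (PW1 i) = x (PW1 i)" if "i < N" for i
    using that by (simp add: merge_def)
  moreover have "?z (PW0 i j) = y (PW0 i j)" if "i < N" "j < d" for i j
    using that J by (auto simp: merge_def)
  ultimately have "rand_net d N ?z = shallow_net d N (\<lambda>i j. y (PW0 i j)) (\<lambda>i. ?z (PB0 i))
      (\<lambda>i. x (PW1 i)) (?z PB1)"
    unfolding rand_net_def shallow_net_def by simp
  with assms show ?thesis
    by (simp add: Lip_shallow_net_ge_of_truncated_sums)
qed

locale random_shallow_net =
  fixes d N :: nat and D0 :: "nat \<Rightarrow> real measure" and D1 :: "real measure"
  assumes d_pos: "1 \<le> d" and N_pos: "1 \<le> N"
    and prob_space_D0: "\<And>i. i < N \<Longrightarrow> prob_space (D0 i)"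
    and sets_D0: "\<And>i. i < N \<Longrightarrow> sets (D0 i) = sets borel"
    and prob_space_D1: "prob_space D1" and sets_D1: "sets D1 = sets borel"
begin

text \<open>Outside \<^term>\<open>params d N\<close> the law is immaterial; choosing a probability measure there
  makes the product a \<^locale>\<open>product_prob_space\<close>.\<close>
definition law :: "param \<Rightarrow> real measure" where
  "law k = (if k \<in> params d N then param_law N D0 D1 k else gaussian 0 1)"

lemma prob_space_law: "prob_space (law k)"
  using N_pos prob_space_D0 prob_space_D1
  by (cases k) (auto simp: law_def param_law_def intro: prob_space_gaussian)

lemma sets_law: "sets (law k) = sets borel"
  using sets_D0 sets_D1 by (cases k) (auto simp: law_def param_law_def)

lemma law_PW0: "i < N \<Longrightarrow> j < d \<Longrightarrow> law (PW0 i j) = gaussian 0 (sqrt (2 / real N))"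
  by (simp add: law_def param_law_def)

lemma law_PW1: "i < N \<Longrightarrow> law (PW1 i) = gaussian 0 1"
  by (simp add: law_def param_law_def)

lemma net_space_eq_PiM_law: "net_space d N D0 D1 = PiM (params d N) law"
  unfolding net_space_def by (rule PiM_cong) (simp_all add: law_def)

lemma prob_W1_truncated_sum_ge:
  "1 - exp (- real N / 72) \<le> measure (PiM (PW1 ` {..<N}) law)
     {x \<in> space (PiM (PW1 ` {..<N}) law). real N / 2 \<le> (\<Sum>i<N. min ((x (PW1 i))\<^sup>2) 3)}"
proof -
  interpret prob_space "PiM (PW1 ` {..<N}) law" by (rule prob_space_PiM) (rule prob_space_law)
  have "indep_vars (\<lambda>_. borel) (\<lambda>i x. restrict x {PW1 i} (PW1 i)) {..<N}"
    using N_pos by (intro indep_vars_PiM_blocks prob_space_law borel_measurable_PiM_component sets_law)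
      (auto simp: disjoint_family_on_def lessThan_empty_iff)
  moreover have "distributed (PiM (PW1 ` {..<N}) law) lborel (\<lambda>x. x (PW1 i)) (normal_density 0 1)"
    if "i \<in> {..<N}" for i
    using that by (intro distributed_PiM_component prob_space_law) (auto simp: law_PW1 gaussian_def)
  ultimately show ?thesis
    using prob_truncated_square_sum_ge[of "{..<N}" "\<lambda>i x. x (PW1 i)" 1] by simp
qed

lemma prob_W0_truncated_sum_ge:
  assumes J: "\<And>i j. i < N \<Longrightarrow> j < d \<Longrightarrow> PW0 i j \<in> J" and a: "0 < (\<Sum>i<N. (a i)\<^sup>2)"
  shows "1 - exp (- real d / 72) \<le> measure (PiM J law)
     {y \<in> space (PiM J law). real d / 2
        \<le> (\<Sum>j<d. min (((\<Sum>i<N. a i * y (PW0 i j)) / sqrt (2 / real N * (\<Sum>i<N. (a i)\<^sup>2)))\<^sup>2) 3)}"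
proof -
  interpret prob_space "PiM J law" by (rule prob_space_PiM) (rule prob_space_law)
  define \<sigma> where "\<sigma> = sqrt (2 / real N * (\<Sum>i<N. (a i)\<^sup>2))"
  have "0 < \<sigma>" using N_pos a by (simp add: \<sigma>_def)
  have J_ne: "J \<noteq> {}" using J[of 0 0] N_pos d_pos by auto
  have "indep_vars (\<lambda>_. borel)
      (\<lambda>j y. (\<lambda>z. \<Sum>i<N. a i * z (PW0 i j)) (restrict y ((\<lambda>i. PW0 i j) ` {..<N}))) {..<d}"
    using J by (intro indep_vars_PiM_blocks[OF prob_space_law J_ne] borel_measurable_sum
        borel_measurable_times borel_measurable_const borel_measurable_PiM_component sets_law)
      (auto simp: disjoint_family_on_def)
  then have indep: "indep_vars (\<lambda>_. borel) (\<lambda>j y. \<Sum>i<N. a i * y (PW0 i j)) {..<d}"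
    by simp
  have "distributed (PiM J law) lborel (\<lambda>y. \<Sum>i<N. a i * y (PW0 i j)) (normal_density 0 \<sigma>)"
    if j: "j \<in> {..<d}" for j
  proof -
    have "indep_vars (\<lambda>_. borel) (\<lambda>i y. restrict y {PW0 i j} (PW0 i j)) {..<N}"
      using J j by (intro indep_vars_PiM_blocks[OF prob_space_law J_ne]
          borel_measurable_PiM_component sets_law) (auto simp: disjoint_family_on_def)
    moreover have "distributed (PiM J law) lborel (\<lambda>y. y (PW0 i j)) (normal_density 0 (sqrt (2 / real N)))"
      if "i \<in> {..<N}" for i
      using that j J by (intro distributed_PiM_component prob_space_law) (auto simp: law_PW0 gaussian_def)
    moreover have "\<exists>i\<in>{..<N}. a i \<noteq> 0"
      using a by (metis power_zero_numeral sum.neutral less_irrefl)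
    ultimately show ?thesis
      unfolding \<sigma>_def real_sqrt_mult using N_pos
      by (intro distributed_weighted_sum_indep_normal) simp_all
  qed
  from prob_truncated_square_sum_ge[OF _ indep \<open>0 < \<sigma>\<close> this]
  show ?thesis by (simp add: \<sigma>_def)
qed

text \<open>Output weights \<open>x\<close> with large truncated squares give \<open>W1 W0\<close> entries of variance
  at least \<open>1\<close>, so the section of the event at \<open>x\<close> contains a set of probability at least
  \<open>1 - exp(-d/72)\<close>.\<close>
lemma prob_Lip_rand_net_ge:
  "(1 - exp (- real N / 72)) * (1 - exp (- real d / 72))
     \<le> measure (net_space d N D0 D1) {\<omega> \<in> space (net_space d N D0 D1).
          sqrt (real d) / (4 * sqrt 2) \<le> Lip d (rand_net d N \<omega>)}"
proof -
  define I where "I = PW1 ` {..<N}"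
  define J where "J = params d N - I"
  define A where "A = {x \<in> space (PiM I law). real N / 2 \<le> (\<Sum>i<N. min ((x (PW1 i))\<^sup>2) 3)}"
  define B where "B x = {y \<in> space (PiM J law). real d / 2 \<le> (\<Sum>j<d. min (((\<Sum>i<N. x (PW1 i) * y (PW0 i j))
      / sqrt (2 / real N * (\<Sum>i<N. (x (PW1 i))\<^sup>2)))\<^sup>2) 3)}" for x
  define L where "L = {\<omega> \<in> space (PiM (I \<union> J) law). sqrt (real d) / (4 * sqrt 2) \<le> Lip d (rand_net d N \<omega>)}"
  have params: "params d N = I \<union> J" "I \<inter> J = {}"
    unfolding I_def J_def by auto
  note [measurable] = borel_measurable_PiM_component[OF sets_law]
    borel_measurable_Lip_rand_net[OF sets_law]
  have sections: "measure (PiM I law) A * (1 - exp (- real d / 72)) \<le> measure (PiM (I \<union> J) law) L"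
  proof (rule measure_PiM_ge_mult_sections[OF prob_space_law params(2)])
    show "finite I" "finite J"
      using finite_params by (auto simp: I_def J_def)
    show "L \<in> sets (PiM (I \<union> J) law)" "A \<in> sets (PiM I law)" "B x \<in> sets (PiM J law)" for x
      unfolding L_def A_def B_def by measurable
    show "0 \<le> 1 - exp (- real d / 72)" by simp
    fix x assume x: "x \<in> A"
    have "(\<Sum>i<N. min ((x (PW1 i))\<^sup>2) 3) \<le> (\<Sum>i<N. (x (PW1 i))\<^sup>2)"
      by (intro sum_mono) simp
    with x N_pos have "0 < (\<Sum>i<N. (x (PW1 i))\<^sup>2)"
      unfolding A_def by auto
    then show "1 - exp (- real d / 72) \<le> measure (PiM J law) (B x)"
      unfolding B_def by (rule prob_W0_truncated_sum_ge[rotated]) (auto simp: J_def I_def)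
    fix y assume y: "y \<in> B x"
    have "(x, y) \<in> space (PiM I law \<Otimes>\<^sub>M PiM J law)"
      using x y by (simp add: A_def B_def space_pair_measure)
    then have "merge I J (x, y) \<in> space (PiM (I \<union> J) law)"
      by (rule measurable_space[OF measurable_merge])
    moreover have "sqrt (real d) / (4 * sqrt 2) \<le> Lip d (rand_net d N (merge I J (x, y)))"
      using x y unfolding I_def by (intro Lip_rand_net_merge_ge d_pos N_pos)
        (auto simp: A_def B_def J_def I_def)
    ultimately show "merge I J (x, y) \<in> L" unfolding L_def by simp
  qed
  have "1 - exp (- real N / 72) \<le> measure (PiM I law) A"
    unfolding A_def I_def by (rule prob_W1_truncated_sum_ge)
  then have "(1 - exp (- real N / 72)) * (1 - exp (- real d / 72))
      \<le> measure (PiM I law) A * (1 - exp (- real d / 72))"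
    by (rule mult_right_mono) simp
  also note sections
  finally show ?thesis
    unfolding net_space_eq_PiM_law params(1) L_def .
qed

lemma nn_integral_Lip_rand_net_ge:
  "ennreal (sqrt (real d) / (4 * sqrt 2) * ((1 - exp (- real N / 72)) * (1 - exp (- real d / 72))))
     \<le> (\<integral>\<^sup>+\<omega>. ennreal (Lip d (rand_net d N \<omega>)) \<partial>net_space d N D0 D1)"
proof -
  define L where "L = {\<omega> \<in> space (net_space d N D0 D1). sqrt (real d) / (4 * sqrt 2) \<le> Lip d (rand_net d N \<omega>)}"
  interpret prob_space "net_space d N D0 D1"
    unfolding net_space_eq_PiM_law by (rule prob_space_PiM) (rule prob_space_law)
  have [measurable]: "(\<lambda>\<omega>. Lip d (rand_net d N \<omega>)) \<in> borel_measurable (net_space d N D0 D1)"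
    unfolding net_space_eq_PiM_law by (rule borel_measurable_Lip_rand_net[OF sets_law])
  then have L_sets: "L \<in> sets (net_space d N D0 D1)"
    unfolding L_def by measurable
  have "sqrt (real d) / (4 * sqrt 2) * ((1 - exp (- real N / 72)) * (1 - exp (- real d / 72)))
      \<le> sqrt (real d) / (4 * sqrt 2) * measure (net_space d N D0 D1) L"
    unfolding L_def by (rule mult_left_mono[OF prob_Lip_rand_net_ge]) simp
  then have "ennreal (sqrt (real d) / (4 * sqrt 2) * ((1 - exp (- real N / 72)) * (1 - exp (- real d / 72))))
      \<le> ennreal (sqrt (real d) / (4 * sqrt 2)) * emeasure (net_space d N D0 D1) L"
    by (simp add: emeasure_eq_measure ennreal_mult'[symmetric] ennreal_leI)
  also have "\<dots> \<le> (\<integral>\<^sup>+\<omega>. ennreal (Lip d (rand_net d N \<omega>)) \<partial>net_space d N D0 D1)"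
    by (rule nn_integral_ge_mult_emeasure[OF L_sets]) (simp add: L_def ennreal_leI)
  finally show ?thesis .
qed

end

lemma tail_product_ge_max:
  fixes x y :: real
  assumes "0 \<le> x" "0 \<le> y"
  shows "max 0 (1 - 2 * exp (- (1 / 144) * x)) * max 0 (1 - 2 * exp (- (1 / 144) * y))
    \<le> (1 - exp (- x / 72)) * (1 - exp (- y / 72))"
proof -
  have "max 0 (1 - 2 * exp (- (1 / 144) * z)) \<le> 1 - exp (- z / 72)" if "0 \<le> z" for z :: real
  proof -
    have "exp (- z / 72) \<le> exp (- (1 / 144) * z)" "exp (- z / 72) \<le> 1"
      using that by simp_all
    moreover have "0 \<le> exp (- (1 / 144) * z)" by simp
    ultimately show ?thesis unfolding max.bounded_iff by linarith
  qed
  with assms show ?thesis by (intro mult_mono) simp_all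
qed

lemma tail_product_ge_9_16:
  fixes x y :: real
  assumes "ln 2 / (1 / 144) < x" "ln 2 / (1 / 144) < y"
  shows "9 / 16 \<le> (1 - exp (- x / 72)) * (1 - exp (- y / 72))"
proof -
  have quarter: "exp (- z / 72) \<le> 1 / 4" if "ln 2 / (1 / 144) < z" for z :: real
  proof -
    have "exp (- z / 72) \<le> exp (- ln 2) * exp (- ln 2)"
      using that by (simp flip: exp_add)
    then show ?thesis by (simp add: exp_minus)
  qed
  from quarter[OF assms(1)] quarter[OF assms(2)]
  have "3 / 4 * (3 / 4) \<le> (1 - exp (- x / 72)) * (1 - exp (- y / 72))"
    by (intro mult_mono) linarith+
  then show ?thesis by simp
qed

theorem theorem3p2:
  shows "\<exists>c::real. \<exists>c1::real. c > 0 \<and> c1 > 0 \<and>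
    (\<forall>(d::nat) (N::nat) (D0::nat \<Rightarrow> real measure) (D1::real measure).
       d \<ge> 1 \<longrightarrow> N \<ge> 1 \<longrightarrow>
       (\<forall>i<N. prob_space (D0 i) \<and> sets (D0 i) = sets borel) \<longrightarrow>
       prob_space D1 \<longrightarrow> sets D1 = sets borel \<longrightarrow>
       (measure (net_space d N D0 D1)
          {\<omega> \<in> space (net_space d N D0 D1).
             Lip d (rand_net d N \<omega>) \<ge> sqrt (real d) / (4 * sqrt 2)}
         \<ge> max 0 (1 - 2 * exp (- c * real N)) * max 0 (1 - 2 * exp (- c * real d)))
       \<and> (real d > ln 2 / c \<and> real N > ln 2 / c \<longrightarrow>
            (\<integral>\<^sup>+ \<omega>. ennreal (Lip d (rand_net d N \<omega>)) \<partial>(net_space d N D0 D1))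
              \<ge> ennreal (c1 * sqrt (real d))))"
proof (rule exI[of _ "1 / 144"], rule exI[of _ "9 / (64 * sqrt 2)"], intro conjI allI impI)
  fix d N :: nat and D0 :: "nat \<Rightarrow> real measure" and D1 :: "real measure"
  assume hyps: "d \<ge> 1" "N \<ge> 1" "\<forall>i<N. prob_space (D0 i) \<and> sets (D0 i) = sets borel"
    "prob_space D1" "sets D1 = sets borel"
  interpret random_shallow_net d N D0 D1
    by (rule random_shallow_net.intro) (use hyps in auto)
  show "max 0 (1 - 2 * exp (- (1 / 144) * real N)) * max 0 (1 - 2 * exp (- (1 / 144) * real d))
      \<le> measure (net_space d N D0 D1) {\<omega> \<in> space (net_space d N D0 D1).
          sqrt (real d) / (4 * sqrt 2) \<le> Lip d (rand_net d N \<omega>)}"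
    by (rule order_trans[OF tail_product_ge_max prob_Lip_rand_net_ge]) simp_all
  assume "ln 2 / (1 / 144) < real d \<and> ln 2 / (1 / 144) < real N"
  then have "9 / 16 \<le> (1 - exp (- real N / 72)) * (1 - exp (- real d / 72))"
    by (intro tail_product_ge_9_16) simp_all
  then have "sqrt (real d) / (4 * sqrt 2) * (9 / 16)
      \<le> sqrt (real d) / (4 * sqrt 2) * ((1 - exp (- real N / 72)) * (1 - exp (- real d / 72)))"
    by (rule mult_left_mono) simp
  then have "9 / (64 * sqrt 2) * sqrt (real d)
      \<le> sqrt (real d) / (4 * sqrt 2) * ((1 - exp (- real N / 72)) * (1 - exp (- real d / 72)))"
    by simp
  with nn_integral_Lip_rand_net_ge
  show "ennreal (9 / (64 * sqrt 2) * sqrt (real d))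
      \<le> (\<integral>\<^sup>+\<omega>. ennreal (Lip d (rand_net d N \<omega>)) \<partial>net_space d N D0 D1)"
    by (meson ennreal_leI order_trans)
qed simp_all

end
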